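(* For every graph $G$, the map $\Phi:B(G)\to B_0(K_2\times G)$, $(\sigma,\tau)\mapsto\{\sigma\times\{1\},\tau\times\{2\}\}$ (identifying $\sigma\times\{1\}$ with $\{(1,x):x\in\sigma\}$ etc.) is a natural isomorphism of $\mathbb{Z}_2$-posets, where $B_0(K_2\times G)$ carries the involution induced by the involution $(1,x)\leftrightarrow(2,x)$ of $K_2\times G$.
   Context: A graph $G$ is a set $V(G)$ with a symmetric subset $E(G)\subset V(G)\times V(G)$ (loops allowed). $K_2\times G$ has vertex set $\{1,2\}\times V(G)$, $((i,x),(j,y))$ an edge iff $i\neq j$ and $(x,y)\in E(G)$. The box complex $B(G)$ is the poset of pairs $(\sigma,\tau)$ of non-empty subsets of $V(G)$ with $\sigma\times\tau\subset E(G)$, ordered by componentwise inclusion, with involution $(\sigma,\tau)\leftrightarrow(\tau,\sigma)$. For a bipartite graph $X$ (one admitting a homomorphism to $K_2$), $B_0(X)$ is the poset whose elements are the unordered pairs $\{\sigma,\tau\}$ of non-empty subsets of $V(X)$ with $\sigma\times\tau\subset E(X)$, with $\alpha\le\beta$ iff for each $\sigma\in\alpha$ there is $\tau\in\beta$ with $\sigma\subset\tau$. An involution $t$ of $X$ (graph automorphism with $t^2=\mathrm{id}$) acts on $B_0(X)$ by $\{\sigma,\tau\}\mapsto\{t(\sigma),t(\tau)\}$. *)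

theory Defs
  imports Main
begin

text \<open>A graph: vertex set V with a symmetric edge relation E on V (loops allowed).\<close>
definition graph :: "'a set \<Rightarrow> ('a \<times> 'a) set \<Rightarrow> bool" where
  "graph V E \<longleftrightarrow> E \<subseteq> V \<times> V \<and> sym E"

definition graph_hom :: "'a set \<Rightarrow> ('a \<times> 'a) set \<Rightarrow> 'b set \<Rightarrow> ('b \<times> 'b) set \<Rightarrow> ('a \<Rightarrow> 'b) \<Rightarrow> bool" where
  "graph_hom V E W F f \<longleftrightarrow> f ` V \<subseteq> W \<and> (\<forall>x y. (x, y) \<in> E \<longrightarrow> (f x, f y) \<in> F)"

definition box_complex :: "'a set \<Rightarrow> ('a \<times> 'a) set \<Rightarrow> ('a set \<times> 'a set) set" where
  "box_complex V E = {(\<sigma>, \<tau>). \<sigma> \<noteq> {} \<and> \<tau> \<noteq> {} \<and> \<sigma> \<subseteq> V \<and> \<tau> \<subseteq> V \<and> \<sigma> \<times> \<tau> \<subseteq> E}"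

definition box_le :: "'a set \<times> 'a set \<Rightarrow> 'a set \<times> 'a set \<Rightarrow> bool" where
  "box_le p q \<longleftrightarrow> fst p \<subseteq> fst q \<and> snd p \<subseteq> snd q"

definition box_inv :: "'a set \<times> 'a set \<Rightarrow> 'a set \<times> 'a set" where
  "box_inv p = (snd p, fst p)"

definition box_map :: "('a \<Rightarrow> 'b) \<Rightarrow> 'a set \<times> 'a set \<Rightarrow> 'b set \<times> 'b set" where
  "box_map f p = (f ` fst p, f ` snd p)"

definition K2_verts :: "'a set \<Rightarrow> (nat \<times> 'a) set" where
  "K2_verts V = {1, 2} \<times> V"

definition K2_edges :: "('a \<times> 'a) set \<Rightarrow> ((nat \<times> 'a) \<times> (nat \<times> 'a)) set" where
  "K2_edges E = {((i, x), (j, y)). i \<in> {1, 2} \<and> j \<in> {1, 2} \<and> i \<noteq> j \<and> (x, y) \<in> E}"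

definition K2_flip :: "nat \<times> 'a \<Rightarrow> nat \<times> 'a" where
  "K2_flip v = (if fst v = 1 then 2 else 1, snd v)"

definition K2_map :: "('a \<Rightarrow> 'b) \<Rightarrow> nat \<times> 'a \<Rightarrow> nat \<times> 'b" where
  "K2_map f v = (fst v, f (snd v))"

definition B0 :: "'b set \<Rightarrow> ('b \<times> 'b) set \<Rightarrow> 'b set set set" where
  "B0 V E = {\<alpha>. \<exists>\<sigma> \<tau>. \<alpha> = {\<sigma>, \<tau>} \<and> \<sigma> \<noteq> {} \<and> \<tau> \<noteq> {} \<and> \<sigma> \<subseteq> V \<and> \<tau> \<subseteq> V \<and> \<sigma> \<times> \<tau> \<subseteq> E}"

definition B0_le :: "'b set set \<Rightarrow> 'b set set \<Rightarrow> bool" where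
  "B0_le \<alpha> \<beta> \<longleftrightarrow> (\<forall>\<sigma>\<in>\<alpha>. \<exists>\<tau>\<in>\<beta>. \<sigma> \<subseteq> \<tau>)"

definition B0_map :: "('b \<Rightarrow> 'c) \<Rightarrow> 'b set set \<Rightarrow> 'c set set" where
  "B0_map t \<alpha> = (\<lambda>\<sigma>. t ` \<sigma>) ` \<alpha>"

definition Phi :: "'a set \<times> 'a set \<Rightarrow> (nat \<times> 'a) set set" where
  "Phi p = {(\<lambda>x. (1::nat, x)) ` fst p, (\<lambda>x. (2::nat, x)) ` snd p}"

end

theory Submission
  imports Defs
begin

(* Write layer i A for the copy {(i,x) | x in A} of A on the i-th side of
   K_2 x G, so that Phi (s, t) = {layer 1 s, layer 2 t}.  Layers are injective in A,
   distinct layers of nonempty sets are disjoint and incomparable, and K_2-edges only run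
   between different layers.  Hence:
   - Phi maps B(G) into B_0(K_2 x G) and is injective (the two layers of Phi p are told
     apart by their side);
   - every element {sigma, tau} of B_0(K_2 x G) has its two sets in opposite layers, and
     using the symmetry of the edge relation we may put sigma on side 1; then it is
     Phi (snd ` sigma, snd ` tau), which gives surjectivity;
   - inclusion between elements of the form Phi p reduces to inclusion layerwise, i.e. to
     the componentwise order of B(G);
   - equivariance and naturality are direct image computations. *)

definition layer :: "nat \<Rightarrow> 'a set \<Rightarrow> (nat \<times> 'a) set" where
  "layer i A = (\<lambda>x. (i, x)) ` A"

lemma box_complex_iff:
  "p \<in> box_complex V E \<longleftrightarrow>
     fst p \<noteq> {} \<and> snd p \<noteq> {} \<and> fst p \<subseteq> V \<and> snd p \<subseteq> V \<and> fst p \<times> snd p \<subseteq> E"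
  by (cases p) (simp add: box_complex_def)

lemma Phi_layers: "Phi p = {layer 1 (fst p), layer 2 (snd p)}"
  by (simp add: Phi_def layer_def)

lemma layer_subset_iff: "layer i A \<subseteq> layer j B \<longleftrightarrow> A = {} \<or> (i = j \<and> A \<subseteq> B)"
  by (auto simp: layer_def)

lemma layer_eq_iff: "A \<noteq> {} \<Longrightarrow> layer i A = layer j B \<longleftrightarrow> i = j \<and> A = B"
  by (auto simp: layer_def)

lemma layer_snd_image: "(\<forall>u\<in>S. fst u = i) \<Longrightarrow> layer i (snd ` S) = S"
  by (force simp: layer_def image_iff)

lemma layer_in_K2_verts: "layer i A \<subseteq> K2_verts V \<longleftrightarrow> A = {} \<or> (i \<in> {1, 2} \<and> A \<subseteq> V)"
  by (auto simp: layer_def K2_verts_def)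

lemma layers_K2_edges: "layer 1 A \<times> layer 2 B \<subseteq> K2_edges E \<longleftrightarrow> A \<times> B \<subseteq> E"
  by (auto simp: layer_def K2_edges_def)

lemma K2_edges_sym: "sym E \<Longrightarrow> sym (K2_edges E)"
  by (auto simp: sym_def K2_edges_def)

lemma K2_edges_opposite_sides:
  assumes "\<sigma> \<noteq> {}" "\<tau> \<noteq> {}" "\<sigma> \<times> \<tau> \<subseteq> K2_edges E"
  obtains i j where "{i, j} = {1, 2}" "\<forall>u\<in>\<sigma>. fst u = i" "\<forall>v\<in>\<tau>. fst v = j"
proof -
  have edge: "fst u \<in> {1, 2} \<and> fst v \<in> {1, 2} \<and> fst u \<noteq> fst v" if "u \<in> \<sigma>" "v \<in> \<tau>" for u v
    using assms(3) that unfolding K2_edges_def by fastforce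
  obtain s t where s: "s \<in> \<sigma>" and t: "t \<in> \<tau>" using assms(1,2) by blast
  have "\<forall>u\<in>\<sigma>. fst u = fst s" using edge[OF _ t] edge[OF s t] by force
  moreover have "\<forall>v\<in>\<tau>. fst v = fst t" using edge[OF s] edge[OF s t] by force
  moreover have "{fst s, fst t} = {1, 2}" using edge[OF s t] by auto
  ultimately show ?thesis using that by blast
qed

lemma Phi_in_B0:
  assumes "p \<in> box_complex V E"
  shows "Phi p \<in> B0 (K2_verts V) (K2_edges E)"
proof -
  have p: "fst p \<noteq> {}" "snd p \<noteq> {}" "fst p \<subseteq> V" "snd p \<subseteq> V" "fst p \<times> snd p \<subseteq> E"
    using assms by (simp_all add: box_complex_iff)
  have "layer 1 (fst p) \<noteq> {}" "layer 2 (snd p) \<noteq> {}" using p by (simp_all add: layer_def)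
  moreover have "layer 1 (fst p) \<subseteq> K2_verts V" "layer 2 (snd p) \<subseteq> K2_verts V"
    using p by (simp_all add: layer_in_K2_verts)
  moreover have "layer 1 (fst p) \<times> layer 2 (snd p) \<subseteq> K2_edges E"
    using p(5) layers_K2_edges by blast
  ultimately show ?thesis unfolding B0_def Phi_layers by blast
qed

text \<open>Phi is injective: side 1 of Phi p can only match side 1 of Phi q.\<close>
lemma Phi_inj_on: "inj_on Phi (box_complex V E)"
proof (rule inj_onI)
  fix p q assume p: "p \<in> box_complex V E" and q: "q \<in> box_complex V E" and eq: "Phi p = Phi q"
  have ne: "fst p \<noteq> {}" "snd p \<noteq> {}" using p by (simp_all add: box_complex_iff)
  have "layer 1 (fst p) \<noteq> layer 2 (snd q)" using ne(1) by (simp add: layer_eq_iff)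
  then have "layer 1 (fst p) = layer 1 (fst q) \<and> layer 2 (snd p) = layer 2 (snd q)"
    using eq unfolding Phi_layers doubleton_eq_iff by blast
  then show "p = q" using ne by (simp add: layer_eq_iff prod_eq_iff)
qed

lemma Phi_hits_sided_pair:
  assumes "\<sigma> \<noteq> {}" "\<tau> \<noteq> {}"
    and "\<sigma> \<subseteq> K2_verts V" "\<tau> \<subseteq> K2_verts V" "\<sigma> \<times> \<tau> \<subseteq> K2_edges E"
    and side1: "\<forall>u\<in>\<sigma>. fst u = 1" and side2: "\<forall>v\<in>\<tau>. fst v = 2"
  shows "{\<sigma>, \<tau>} \<in> Phi ` box_complex V E"
proof -
  have \<sigma>: "layer 1 (snd ` \<sigma>) = \<sigma>" and \<tau>: "layer 2 (snd ` \<tau>) = \<tau>"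
    using side1 side2 by (simp_all add: layer_snd_image)
  have "(snd ` \<sigma>, snd ` \<tau>) \<in> box_complex V E"
    using assms(1-5) \<sigma> \<tau> layer_in_K2_verts[of 1 "snd ` \<sigma>" V] layer_in_K2_verts[of 2 "snd ` \<tau>" V]
      layers_K2_edges[of "snd ` \<sigma>" "snd ` \<tau>" E]
    by (simp add: box_complex_iff)
  moreover have "Phi (snd ` \<sigma>, snd ` \<tau>) = {\<sigma>, \<tau>}" by (simp only: Phi_layers fst_conv snd_conv \<sigma> \<tau>)
  ultimately show ?thesis by (metis image_eqI)
qed

text \<open>Phi is onto B_0(K_2 x G): orient any element so that its first set lies on side 1.\<close>
lemma Phi_onto:
  assumes "graph V E" "\<alpha> \<in> B0 (K2_verts V) (K2_edges E)"
  shows "\<alpha> \<in> Phi ` box_complex V E"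
proof -
  obtain \<sigma> \<tau> where \<alpha>: "\<alpha> = {\<sigma>, \<tau>}" and ne: "\<sigma> \<noteq> {}" "\<tau> \<noteq> {}"
    and verts: "\<sigma> \<subseteq> K2_verts V" "\<tau> \<subseteq> K2_verts V" and edges: "\<sigma> \<times> \<tau> \<subseteq> K2_edges E"
    using assms(2) unfolding B0_def by blast
  have edges': "\<tau> \<times> \<sigma> \<subseteq> K2_edges E"
    using edges K2_edges_sym[of E] assms(1) by (auto simp: graph_def sym_def)
  have swap: "{\<tau>, \<sigma>} = \<alpha>" using \<alpha> by blast
  obtain i j where ij: "{i, j} = {1, 2}" "\<forall>u\<in>\<sigma>. fst u = i" "\<forall>v\<in>\<tau>. fst v = j"
    using K2_edges_opposite_sides[OF ne edges] .
  then consider "i = 1" "j = 2" | "i = 2" "j = 1" by (auto simp: doubleton_eq_iff)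
  then show ?thesis
  proof cases
    case 1
    then show ?thesis using Phi_hits_sided_pair[of \<sigma> \<tau>] \<alpha> ne verts edges ij by simp
  next
    case 2
    then show ?thesis using Phi_hits_sided_pair[of \<tau> \<sigma>] swap ne verts edges' ij by simp
  qed
qed

lemma Phi_bij: "graph V E \<Longrightarrow> bij_betw Phi (box_complex V E) (B0 (K2_verts V) (K2_edges E))"
  unfolding bij_betw_def using Phi_inj_on Phi_in_B0 Phi_onto by blast

text \<open>Phi is an order embedding: the side-1 layer can only fit into the side-1 layer.\<close>
lemma Phi_order:
  assumes "fst p \<noteq> {}" "snd p \<noteq> {}"
  shows "box_le p q \<longleftrightarrow> B0_le (Phi p) (Phi q)"
  using assms unfolding box_le_def B0_le_def Phi_layers by (simp add: layer_subset_iff)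

lemma Phi_equivariant: "Phi (box_inv p) = B0_map K2_flip (Phi p)"
proof -
  have "K2_flip ` layer 1 A = layer 2 A" "K2_flip ` layer 2 A = layer 1 A" for A :: "'a set"
    by (auto simp: K2_flip_def layer_def image_image)
  then show ?thesis by (simp add: Phi_layers B0_map_def box_inv_def insert_commute)
qed

text \<open>Naturality holds for any vertex map, not only graph homomorphisms.\<close>
lemma Phi_natural: "Phi (box_map f p) = B0_map (K2_map f) (Phi p)"
  by (simp add: Phi_def B0_map_def box_map_def K2_map_def image_image)

theorem proposition4p2:
  fixes V :: "'a set" and E :: "('a \<times> 'a) set"
  assumes "graph V E"
  shows "bij_betw Phi (box_complex V E) (B0 (K2_verts V) (K2_edges E))
    \<and> (\<forall>p\<in>box_complex V E. \<forall>q\<in>box_complex V E. box_le p q \<longleftrightarrow> B0_le (Phi p) (Phi q))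
    \<and> (\<forall>p\<in>box_complex V E. Phi (box_inv p) = B0_map K2_flip (Phi p))
    \<and> (\<forall>(W :: 'b set) F f. graph W F \<and> graph_hom V E W F f \<longrightarrow>
         (\<forall>p\<in>box_complex V E. Phi (box_map f p) = B0_map (K2_map f) (Phi p)))"
proof -
  have "box_le p q \<longleftrightarrow> B0_le (Phi p) (Phi q)" if "p \<in> box_complex V E" for p q
    using that Phi_order[of p q] by (simp add: box_complex_iff)
  then show ?thesis using Phi_bij[OF assms] Phi_equivariant Phi_natural by blast
qed

end
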